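(* Let $Z=(Y,A,X)\sim\mathbb{P}$ and let $\widehat{\mu}=(\widehat\mu_1,\dots,\widehat\mu_p)^\top$ be an estimator of $\mu$ constructed from a separate sample independent of $Z_1,\dots,Z_n$. Let $\widehat{C}\in\arg\min_{C\in\mathcal{C}_k}\widehat{R}_n(C)$, where $\widehat{R}_n(C)=\frac{1}{n}\sum_{i=1}^n\|\widehat\mu(X_i)-\Pi_C(\widehat\mu(X_i))\|_2^2$, and let $C^*\in\mathcal{C}_k^*$. Suppose $\mathbb{P}$ satisfies the margin condition with some radius $\kappa>0$ and rate $\alpha>0$, and that: (A1) $\|\mu_a\|_\infty,\|\widehat\mu_a\|_\infty\le B<\infty$ almost surely for all $a\in\mathcal{A}$; (A2) $\max_a\|\widehat\mu_a-\mu_a\|_\infty=o_{\mathbb{P}}(1)$. Let $$R_{1,n}=\max_a\|\widehat\mu_a-\mu_a\|_{\mathbb{P},1}+\max_a\|\widehat\mu_a-\mu_a\|_\infty^{\alpha+1}+\frac{1}{\kappa}\max_a\big(\|\widehat\mu_a-\mu_a\|_\infty\|\widehat\mu_a-\mu_a\|_{\mathbb{P},1}\big).$$ Then $$\mathbb{P}\{R(\widehat C)-R(C^* )\}=O\Big(\frac{1}{\sqrt n}+R_{1,n}\Big)\quad\text{and}\quad R(\widehat C)-R(C^* )=O_{\mathbb{P}}\Big(\sqrt{\frac{\log n}{n}}+R_{1,n}\Big).$$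
   Context: Observed data: i.i.d. $Z_1,\dots,Z_n$ copies of $Z=(Y,A,X)\sim\mathbb{P}$, with outcome $Y\in\mathbb{R}$, treatment $A\in\mathcal{A}=\{1,\dots,p\}$, covariates $X\in\mathcal{X}\subseteq\mathbb{R}^d$. For $a\in\mathcal{A}$, $\mu_a(X)=\mathbb{E}(Y\mid X,A=a)$ and $\mu=\mu(X)=(\mu_1(X),\dots,\mu_p(X))^\top$. (Standing identification assumptions: consistency $Y=Y^a$ if $A=a$, no unmeasured confounding $A\perp Y^a\mid X$, and positivity $\mathbb{P}(A=a\mid X)$ bounded away from $0$.) A codebook is a set $C=\{c_1,\dots,c_k\}$ of $k$ points in $\mathbb{R}^p$; $\mathcal{C}_k$ is the set of all codebooks of size $k$ in the image of $\mu$. $\Pi_C(x)=\arg\min_{c\in C}\|c-x\|_2^2$. The population clustering risk is $R(C)=\mathbb{E}\|\mu-\Pi_C(\mu)\|_2^2$, and $\mathcal{C}_k^*$ is the set of minimizers of $R$ over $\mathcal{C}_k$. For $C^*\in\mathcal{C}^*_k$, the Voronoi cell is $V_j(C^* )=\{x:\|x-c_j^*\|_2\le\|x-c_i^*\|_2\ \forall i\ne j\}$, and for $t>0$, $N_{C^*}(t)=\bigcup_j\{x\in V_j(C^* ):|\,\|x-c_j^*\|_2-\min_{i\ne j}\|x-c_i^*\|_2\,|\le t\}$. Margin condition with radius $\kappa>0$ and rate $\alpha>0$: for all $0\le t\le\kappa$, $\sup_{C^*\in\mathcal{C}_k^*}\mathbb{P}(\mu\in N_{C^*}(t))\lesssim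 t^\alpha$. Notation: $\|f\|_{\mathbb{P},q}=(\int|f|^q\,d\mathbb{P})^{1/q}$, $\|f\|_\infty$ the sup norm; $\mathbb{P}(\hat f)=\int\hat f(z)\,d\mathbb{P}(z)$ denotes expectation with any sample-dependent quantities in $\hat f$ held fixed (so, e.g., it is conditional on the sample used to build $\widehat\mu$); $a_n\lesssim b_n$ means $a_n\le \mathsf{c}\,b_n$ for a constant $\mathsf{c}>0$. *)

theory Defs
  imports "HOL-Probability.Probability"
begin

definition proj :: "('a::real_normed_vector) set \<Rightarrow> 'a \<Rightarrow> 'a" where
  "proj C y = (SOME c. c \<in> C \<and> (\<forall>c'\<in>C. (norm (c - y))^2 \<le> (norm (c' - y))^2))"

definition codebooks :: "('x \<Rightarrow> 'a) \<Rightarrow> 'x set \<Rightarrow> nat \<Rightarrow> 'a set set" where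
  "codebooks mu X k = {C. C \<subseteq> mu ` X \<and> finite C \<and> card C = k}"

definition clust_risk :: "'x measure \<Rightarrow> ('x \<Rightarrow> 'a::real_normed_vector) \<Rightarrow> 'a set \<Rightarrow> real" where
  "clust_risk P mu C = (\<integral>x. (norm (mu x - proj C (mu x)))^2 \<partial>P)"

definition optimal_codebooks ::
  "'x measure \<Rightarrow> ('x \<Rightarrow> 'a::real_normed_vector) \<Rightarrow> 'x set \<Rightarrow> nat \<Rightarrow> 'a set set" where
  "optimal_codebooks P mu X k =
     {C \<in> codebooks mu X k. \<forall>C'\<in>codebooks mu X k. clust_risk P mu C \<le> clust_risk P mu C'}"

definition emp_risk :: "nat \<Rightarrow> ('x \<Rightarrow> 'a::real_normed_vector) \<Rightarrow> (nat \<Rightarrow> 'x) \<Rightarrow> 'a set \<Rightarrow> real" where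
  "emp_risk n muh xs C = (1 / real n) * (\<Sum>i<n. (norm (muh (xs i) - proj C (muh (xs i))))^2)"

definition voronoi :: "('a::metric_space) set \<Rightarrow> 'a \<Rightarrow> 'a set" where
  "voronoi C c = {x. \<forall>c'\<in>C - {c}. dist x c \<le> dist x c'}"

text \<open>N_C(t). The minimum over the empty set (k = 1) is +infinity, so that case
  contributes nothing; this is encoded by the guard C - {c} \<noteq> {}.\<close>
definition margin_nbhd :: "('a::metric_space) set \<Rightarrow> real \<Rightarrow> 'a set" where
  "margin_nbhd C t = (\<Union>c\<in>C. {x \<in> voronoi C c. C - {c} \<noteq> {} \<and>
       \<bar>dist x c - Min ((\<lambda>c'. dist x c') ` (C - {c}))\<bar> \<le> t})"

definition margin_condition ::
  "'x measure \<Rightarrow> ('x \<Rightarrow> 'a::real_normed_vector) \<Rightarrow> 'x set \<Rightarrow> nat \<Rightarrow> real \<Rightarrow> real \<Rightarrow> bool" where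
  "margin_condition P mu X k \<kappa> \<alpha> \<longleftrightarrow> \<kappa> > 0 \<and> \<alpha> > 0 \<and>
     (\<exists>c>0. \<forall>t. 0 \<le> t \<and> t \<le> \<kappa> \<longrightarrow>
        (\<forall>Cs\<in>optimal_codebooks P mu X k.
            measure P {x \<in> space P. mu x \<in> margin_nbhd Cs t} \<le> c * t powr \<alpha>))"

definition supnorm :: "'x set \<Rightarrow> ('x \<Rightarrow> real) \<Rightarrow> real" where
  "supnorm X f = (SUP x\<in>X. \<bar>f x\<bar>)"

definition L1norm :: "'x measure \<Rightarrow> ('x \<Rightarrow> real) \<Rightarrow> real" where
  "L1norm P f = (\<integral>x. \<bar>f x\<bar> \<partial>P)"

definition rem_R1 :: "'x measure \<Rightarrow> 'x set \<Rightarrow> ('x \<Rightarrow> real^'p) \<Rightarrow> ('x \<Rightarrow> real^'p)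
    \<Rightarrow> real \<Rightarrow> real \<Rightarrow> real" where
  "rem_R1 P X mu muh \<kappa> \<alpha> =
     (MAX a. L1norm P (\<lambda>x. muh x $ a - mu x $ a))
     + (MAX a. supnorm X (\<lambda>x. muh x $ a - mu x $ a)) powr (\<alpha> + 1)
     + (1 / \<kappa>) * (MAX a. supnorm X (\<lambda>x. muh x $ a - mu x $ a)
                          * L1norm P (\<lambda>x. muh x $ a - mu x $ a))"

end

theory Submission
  imports Defs
begin

(*
  Write p = CARD('p) and f_C for the squared distance to a codebook C.  The estimate muh
  is bounded on X only; clipped to 0 outside X it becomes a bounded function y, and since
  f_C is Lipschitz, replacing mu by y changes every risk by at most 4 p b times the L1 error
  of muh.  For y the empirical risk minimiser satisfies the basic inequality
    R_y(Chat) - R_y(Cstar) <= (P - P_n) f_Chat + (P_n - P) f_Cstar,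
  whose second term has mean zero.  The first term is bounded uniformly over all bounded
  codebooks by chaining over dyadic grids of mesh b / 2^j: a Hoeffding maximal inequality
  on each finite level and on the links between consecutive levels, summed over the levels,
  gives O(1 / sqrt n).  As R_{1,n} dominates the L1 error, this is the bound in expectation,
  conditionally on the estimator; Markov's inequality on each section and Fubini give the
  bound in probability.
*)

definition emp_dev :: "'x measure \<Rightarrow> nat \<Rightarrow> ('x \<Rightarrow> real) \<Rightarrow> (nat \<Rightarrow> 'x) \<Rightarrow> real" where
  "emp_dev P n f xs = (\<integral>x. f x \<partial>P) - (\<Sum>t<n. f (xs t)) / real n"

lemma emp_dev_measurable [measurable]:
  assumes [measurable]: "f \<in> borel_measurable P"
  shows "emp_dev P n f \<in> borel_measurable (PiM {..<n} (\<lambda>_. P))"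
  unfolding emp_dev_def by measurable

lemma emp_dev_diff:
  "integrable P f \<Longrightarrow> integrable P g \<Longrightarrow>
    emp_dev P n (\<lambda>x. f x - g x) xs = emp_dev P n f xs - emp_dev P n g xs"
  unfolding emp_dev_def by (simp add: sum_subtractf diff_divide_distrib)

lemma expected_emp_dev_eq_0:
  assumes P: "prob_space P" and f: "integrable P f" and n: "n > 0"
  shows "(\<integral>xs. emp_dev P n f xs \<partial>PiM {..<n} (\<lambda>_. P)) = 0"
proof -
  interpret Pn: prob_space "PiM {..<n} (\<lambda>_. P)" by (intro prob_space_PiM) (simp add: P)
  have distr_eq: "distr (PiM {..<n} (\<lambda>_. P)) P (\<lambda>xs. xs t) = P" if "t < n" for t
    using that P by (intro distr_PiM_component) auto
  have component_int: "integrable (PiM {..<n} (\<lambda>_. P)) (\<lambda>xs. f (xs t))" if "t < n" for t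
    using f that distr_eq[OF that] by (intro integrable_distr[of "\<lambda>xs. xs t" _ P]) auto
  have component_integral: "(\<integral>xs. f (xs t) \<partial>PiM {..<n} (\<lambda>_. P)) = (\<integral>x. f x \<partial>P)" if "t < n" for t
  proof -
    have "(\<integral>x. f x \<partial>P) = (\<integral>x. f x \<partial>distr (PiM {..<n} (\<lambda>_. P)) P (\<lambda>xs. xs t))"
      by (simp only: distr_eq[OF that])
    also have "\<dots> = (\<integral>xs. f (xs t) \<partial>PiM {..<n} (\<lambda>_. P))"
      using f that by (intro integral_distr) auto
    finally show ?thesis ..
  qed
  have "(\<integral>xs. (\<Sum>t<n. f (xs t)) / real n \<partial>PiM {..<n} (\<lambda>_. P)) = (\<integral>x. f x \<partial>P)"
    using component_int component_integral n by (simp add: Bochner_Integration.integral_sum)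
  then show ?thesis
    unfolding emp_dev_def using component_int
    by (subst Bochner_Integration.integral_diff)
       (auto simp: Pn.prob_space intro!: Bochner_Integration.integrable_sum)
qed

lemma emp_dev_abs_le:
  assumes P: "prob_space P" and "integrable P f" and n: "n > 0"
    and f: "\<And>x. x \<in> space P \<Longrightarrow> \<bar>f x\<bar> \<le> b" and xs: "\<And>t. t < n \<Longrightarrow> \<bar>f (xs t)\<bar> \<le> b"
  shows "\<bar>emp_dev P n f xs\<bar> \<le> 2 * b"
proof -
  interpret prob_space P by (fact P)
  have "\<bar>\<integral>x. f x \<partial>P\<bar> \<le> (\<integral>x. \<bar>f x\<bar> \<partial>P)"
    by (rule integral_abs_bound)
  also have "\<dots> \<le> b"
    using integral_mono[OF integrable_abs[OF assms(2)] integrable_const, of b] f prob_space by simp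
  finally have "\<bar>\<integral>x. f x \<partial>P\<bar> \<le> b" .
  moreover have "\<bar>\<Sum>t<n. f (xs t)\<bar> \<le> real n * b"
  proof -
    have "\<bar>\<Sum>t<n. f (xs t)\<bar> \<le> (\<Sum>t<n. \<bar>f (xs t)\<bar>)" by (rule sum_abs)
    also have "\<dots> \<le> (\<Sum>t<n. b)" by (intro sum_mono xs) simp
    finally show ?thesis by simp
  qed
  ultimately have "\<bar>(\<Sum>t<n. f (xs t)) / real n\<bar> \<le> b"
    using n by (simp add: divide_le_eq mult.commute)
  with \<open>\<bar>\<integral>x. f x \<partial>P\<bar> \<le> b\<close> show ?thesis
    unfolding emp_dev_def by linarith
qed

lemma emp_dev_integrable:
  assumes P: "prob_space P" and f: "f \<in> borel_measurable P" "\<And>x. x \<in> space P \<Longrightarrow> \<bar>f x\<bar> \<le> c"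
    and n: "n > 0"
  shows "integrable (PiM {..<n} (\<lambda>_. P)) (emp_dev P n f)"
proof -
  interpret prob_space P by (fact P)
  interpret Pn: prob_space "PiM {..<n} (\<lambda>_. P)" by (intro prob_space_PiM) (simp add: P)
  have "integrable P f" using f by (intro integrable_const_bound[where B=c] AE_I2) auto
  then have "\<bar>emp_dev P n f xs\<bar> \<le> 2 * c" if "xs \<in> space (PiM {..<n} (\<lambda>_. P))" for xs
    using that f by (intro emp_dev_abs_le[OF P _ n]) (auto simp: space_PiM PiE_iff)
  then show ?thesis
    using f by (intro Pn.integrable_const_bound[where B="2 * c"] AE_I2) auto
qed

lemma emp_dev_mgf_le:
  assumes P: "prob_space P" and f: "f \<in> borel_measurable P" "\<And>x. x \<in> space P \<Longrightarrow> \<bar>f x\<bar> \<le> b"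
    and n: "n > 0" and l: "l > 0"
  shows "(\<integral>\<^sup>+xs. exp (l * emp_dev P n f xs) \<partial>PiM {..<n} (\<lambda>_. P)) \<le> ennreal (exp (l\<^sup>2 * b\<^sup>2 / (2 * n)))"
proof -
  interpret prob_space P by (fact P)
  interpret product_sigma_finite "\<lambda>_::nat. P"
    by (simp add: product_sigma_finite_def sigma_finite_measure_axioms)
  interpret neg_f: interval_bounded_random_variable P "\<lambda>x. - f x" "-b" b
    by unfold_locales (use f in \<open>auto simp: abs_le_iff intro!: AE_I2\<close>)
  define l' where "l' = l / n"
  have l': "l' > 0" unfolding l'_def using l n by simp
  have "l * emp_dev P n f xs = (\<Sum>t<n. l' * (- f (xs t) - (\<integral>x. - f x \<partial>P)))" for xs
  proof -
    have "(\<Sum>t<n. l' * (- f (xs t) - (\<integral>x. - f x \<partial>P)))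
        = l' * (real n * (\<integral>x. f x \<partial>P)) - l' * (\<Sum>t<n. f (xs t))"
      by (simp add: sum_distrib_left[symmetric] sum_subtractf algebra_simps)
    also have "\<dots> = l * emp_dev P n f xs"
      using n unfolding emp_dev_def l'_def by (simp add: field_simps)
    finally show ?thesis ..
  qed
  then have "ennreal (exp (l * emp_dev P n f xs))
      = (\<Prod>t\<in>{..<n}. ennreal (exp (l' * (- f (xs t) - (\<integral>x. - f x \<partial>P)))))" for xs
    by (simp add: exp_sum prod_ennreal)
  then have "(\<integral>\<^sup>+xs. exp (l * emp_dev P n f xs) \<partial>PiM {..<n} (\<lambda>_. P)) =
      (\<Prod>t\<in>{..<n}. \<integral>\<^sup>+x. exp (l' * (- f x - (\<integral>x. - f x \<partial>P))) \<partial>P)"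
    by (simp only:) (rule product_nn_integral_prod, use f in auto)
  also have "\<dots> \<le> (\<Prod>t<n. ennreal (exp (l'\<^sup>2 * (b - - b)\<^sup>2 / 8)))"
    by (intro prod_mono_ennreal neg_f.Hoeffdings_lemma_nn_integral l')
  also have "\<dots> = ennreal (exp (l'\<^sup>2 * (b - - b)\<^sup>2 / 8) ^ n)"
    by (simp add: ennreal_power)
  also have "exp (l'\<^sup>2 * (b - - b)\<^sup>2 / 8) ^ n = exp (real n * (l'\<^sup>2 * (b - - b)\<^sup>2 / 8))"
    by (rule exp_of_nat_mult[symmetric])
  also have "real n * (l'\<^sup>2 * (b - - b)\<^sup>2 / 8) = l\<^sup>2 * b\<^sup>2 / (2 * n)"
    using n unfolding l'_def by (simp add: power2_eq_square field_simps)
  finally show ?thesis .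
qed

lemma expected_Max_le_of_mgf:
  fixes Z :: "'i \<Rightarrow> 'a \<Rightarrow> real"
  assumes M: "prob_space M" and I: "finite I" "I \<noteq> {}" and l: "l > 0"
    and Z: "\<And>i. i \<in> I \<Longrightarrow> Z i \<in> borel_measurable M"
      "\<And>i x. i \<in> I \<Longrightarrow> x \<in> space M \<Longrightarrow> \<bar>Z i x\<bar> \<le> B"
    and mgf: "\<And>i. i \<in> I \<Longrightarrow> (\<integral>\<^sup>+x. exp (l * Z i x) \<partial>M) \<le> ennreal (exp K)"
  shows "integrable M (\<lambda>x. MAX i\<in>I. Z i x)"
    and "(\<integral>x. (MAX i\<in>I. Z i x) \<partial>M) \<le> (ln (card I) + K) / l"
proof -
  interpret prob_space M by (fact M)
  define Zmax where "Zmax x = (MAX i\<in>I. Z i x)" for x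
  have Zmax_attained: "\<exists>i\<in>I. Zmax x = Z i x" for x
  proof -
    have "Zmax x \<in> (\<lambda>i. Z i x) ` I" unfolding Zmax_def using I by (intro Max_in) auto
    then show ?thesis by auto
  qed
  have Zmax_meas: "Zmax \<in> borel_measurable M"
    unfolding Zmax_def using Z(1) I by (intro borel_measurable_Max) auto
  have Zmax_bound: "\<bar>Zmax x\<bar> \<le> B" if "x \<in> space M" for x
    using Zmax_attained[of x] Z(2) that by auto
  have scaled_le: "l * z \<le> l * B" if "\<bar>z\<bar> \<le> B" for z
    using that l by (simp add: abs_le_iff)
  have exp_Z_int: "integrable M (\<lambda>x. exp (l * Z i x))" if "i \<in> I" for i
    using Z(1)[OF that] Z(2)[OF that]
    by (intro integrable_const_bound[where B="exp (l * B)"] AE_I2) (auto intro!: scaled_le)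
  have exp_Zmax_int: "integrable M (\<lambda>x. exp (l * Zmax x))"
    using Zmax_meas Zmax_bound
    by (intro integrable_const_bound[where B="exp (l * B)"] AE_I2) (auto intro!: scaled_le)
  have Zmax_int: "integrable M Zmax"
    using Zmax_meas Zmax_bound by (intro integrable_const_bound[where B=B] AE_I2) auto
  then show "integrable M (\<lambda>x. MAX i\<in>I. Z i x)" unfolding Zmax_def .
  have "exp (l * (\<integral>x. Zmax x \<partial>M)) \<le> (\<integral>x. exp (l * Zmax x) \<partial>M)"
    using Zmax_int exp_Zmax_int l by (intro jensens_inequality[where I=UNIV]) (auto intro!: convex_on_exp)
  also have "\<dots> \<le> (\<integral>x. (\<Sum>i\<in>I. exp (l * Z i x)) \<partial>M)"
  proof (intro integral_mono Bochner_Integration.integrable_sum exp_Z_int exp_Zmax_int)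
    show "exp (l * Zmax x) \<le> (\<Sum>i\<in>I. exp (l * Z i x))" for x
      using Zmax_attained[of x] I by (auto intro!: member_le_sum)
  qed
  also have "\<dots> = (\<Sum>i\<in>I. \<integral>x. exp (l * Z i x) \<partial>M)"
    by (intro Bochner_Integration.integral_sum exp_Z_int)
  also have "\<dots> \<le> (\<Sum>i\<in>I. exp K)"
  proof (intro sum_mono)
    fix i assume "i \<in> I"
    have "ennreal (\<integral>x. exp (l * Z i x) \<partial>M) = (\<integral>\<^sup>+x. exp (l * Z i x) \<partial>M)"
      using exp_Z_int[OF \<open>i \<in> I\<close>] by (intro nn_integral_eq_integral[symmetric]) auto
    with mgf[OF \<open>i \<in> I\<close>] have "ennreal (\<integral>x. exp (l * Z i x) \<partial>M) \<le> ennreal (exp K)" by simp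
    then show "(\<integral>x. exp (l * Z i x) \<partial>M) \<le> exp K" by (simp add: ennreal_le_iff)
  qed
  also have "\<dots> = exp (ln (card I) + K)"
    using I by (simp add: exp_add card_gt_0_iff)
  finally have "l * (\<integral>x. Zmax x \<partial>M) \<le> ln (card I) + K" by simp
  then show "(\<integral>x. (MAX i\<in>I. Z i x) \<partial>M) \<le> (ln (card I) + K) / l"
    unfolding Zmax_def using l by (simp add: field_simps)
qed

lemma expected_Max_emp_dev_le:
  fixes f :: "'i \<Rightarrow> 'x \<Rightarrow> real"
  assumes P: "prob_space P" and I: "finite I" "I \<noteq> {}" and n: "n > 0" and b: "b > 0"
    and f: "\<And>i. i \<in> I \<Longrightarrow> f i \<in> borel_measurable P"
      "\<And>i x. i \<in> I \<Longrightarrow> x \<in> space P \<Longrightarrow> \<bar>f i x\<bar> \<le> b"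
  shows "integrable (PiM {..<n} (\<lambda>_. P)) (\<lambda>xs. MAX i\<in>I. emp_dev P n (f i) xs)"
    and "(\<integral>xs. (MAX i\<in>I. emp_dev P n (f i) xs) \<partial>PiM {..<n} (\<lambda>_. P))
           \<le> b * (ln (card I) + 1/2) / sqrt n"
proof -
  interpret prob_space P by (fact P)
  define l where "l = sqrt n / b"
  have l: "l > 0" unfolding l_def using n b by auto
  have exponent: "l\<^sup>2 * b\<^sup>2 / (2 * n) = 1/2"
    unfolding l_def using n b by (simp add: power_divide)
  have mgf: "(\<integral>\<^sup>+xs. exp (l * emp_dev P n (f i) xs) \<partial>PiM {..<n} (\<lambda>_. P)) \<le> ennreal (exp (1/2))"
    if "i \<in> I" for i
    using emp_dev_mgf_le[OF P f(1)[OF that] f(2)[OF that] n l] unfolding exponent .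
  have bound: "\<bar>emp_dev P n (f i) xs\<bar> \<le> 2 * b" if "i \<in> I" "xs \<in> space (PiM {..<n} (\<lambda>_. P))" for i xs
    using that f
    by (intro emp_dev_abs_le[OF P _ n] integrable_const_bound[where B=b] AE_I2)
       (auto simp: space_PiM PiE_iff)
  have Pn: "prob_space (PiM {..<n} (\<lambda>_. P))" by (intro prob_space_PiM) (simp add: P)
  note Max_le = expected_Max_le_of_mgf[OF Pn I l _ bound mgf]
  show "integrable (PiM {..<n} (\<lambda>_. P)) (\<lambda>xs. MAX i\<in>I. emp_dev P n (f i) xs)"
    using Max_le(1) f(1) by simp
  show "(\<integral>xs. (MAX i\<in>I. emp_dev P n (f i) xs) \<partial>PiM {..<n} (\<lambda>_. P))
           \<le> b * (ln (card I) + 1/2) / sqrt n"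
    using Max_le(2) f(1) unfolding l_def using b n by (simp add: mult.commute)
qed

definition min_sqdist :: "'a::real_normed_vector set \<Rightarrow> 'a \<Rightarrow> real" where
  "min_sqdist C y = Min ((\<lambda>c. (norm (c - y))\<^sup>2) ` C)"

lemma norm_diff_proj_sq:
  assumes "finite C" "C \<noteq> {}"
  shows "(norm (y - proj C y))\<^sup>2 = min_sqdist C y"
proof -
  let ?f = "\<lambda>c. (norm (c - y))\<^sup>2"
  have "Min (?f ` C) \<in> ?f ` C" using assms by (intro Min_in) auto
  then obtain c0 where "c0 \<in> C" "?f c0 = Min (?f ` C)" by auto
  then have "\<exists>c. c \<in> C \<and> (\<forall>c'\<in>C. ?f c \<le> ?f c')"
    using assms by (metis Min_le finite_imageI image_eqI)
  then have "proj C y \<in> C \<and> (\<forall>c'\<in>C. ?f (proj C y) \<le> ?f c')"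
    unfolding proj_def by (rule someI_ex)
  then have "?f (proj C y) = Min (?f ` C)"
    using assms by (intro antisym Min_le Min.boundedI) auto
  then show ?thesis by (simp add: min_sqdist_def norm_minus_commute)
qed

lemma min_sqdist_image: "min_sqdist (\<phi> ` K) y = Min ((\<lambda>i. (norm (\<phi> i - y))\<^sup>2) ` K)"
  unfolding min_sqdist_def by (simp add: image_image)

lemma min_sqdist_nonneg: "finite C \<Longrightarrow> C \<noteq> {} \<Longrightarrow> 0 \<le> min_sqdist C y"
  unfolding min_sqdist_def by (subst Min_ge_iff) auto

lemma min_sqdist_le: "finite C \<Longrightarrow> c \<in> C \<Longrightarrow> min_sqdist C y \<le> (norm (c - y))\<^sup>2"
  unfolding min_sqdist_def by (intro Min_le) auto

lemma min_sqdist_measurable [measurable]: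
  fixes f :: "'x \<Rightarrow> 'a::euclidean_space"
  assumes "finite C" and [measurable]: "f \<in> borel_measurable M"
  shows "(\<lambda>x. min_sqdist C (f x)) \<in> borel_measurable M"
  unfolding min_sqdist_def using assms(1) by measurable

lemma abs_Min_image_diff_le:
  fixes u v :: "'i \<Rightarrow> real"
  assumes "finite K" "K \<noteq> {}" "\<And>i. i \<in> K \<Longrightarrow> \<bar>u i - v i\<bar> \<le> d"
  shows "\<bar>Min (u ` K) - Min (v ` K)\<bar> \<le> d"
proof -
  have "Min (u ` K) \<in> u ` K" "Min (v ` K) \<in> v ` K" using assms(1,2) by (auto intro!: Min_in)
  then obtain i j where "i \<in> K" "Min (u ` K) = u i" "j \<in> K" "Min (v ` K) = v j" by auto
  moreover from this have "u i \<le> u j" "v j \<le> v i"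
    using assms(1) by (metis Min_le finite_imageI imageI)+
  ultimately show ?thesis using assms(3)[of i] assms(3)[of j] by (simp add: abs_le_iff)
qed

lemma abs_norm_sq_diff_le:
  fixes u v :: "'a::real_normed_vector"
  assumes "norm u \<le> R" "norm v \<le> R"
  shows "\<bar>(norm u)\<^sup>2 - (norm v)\<^sup>2\<bar> \<le> 2 * R * norm (u - v)"
proof -
  have "(norm u)\<^sup>2 - (norm v)\<^sup>2 = (norm u - norm v) * (norm u + norm v)"
    by (simp add: power2_eq_square algebra_simps)
  then have "\<bar>(norm u)\<^sup>2 - (norm v)\<^sup>2\<bar> = \<bar>norm u - norm v\<bar> * (norm u + norm v)"
    by (simp add: abs_mult)
  also have "\<dots> \<le> norm (u - v) * (2 * R)"
    using assms by (intro mult_mono norm_triangle_ineq3) auto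
  finally show ?thesis by (simp add: mult_ac)
qed

lemma min_sqdist_lipschitz:
  assumes "finite C" "C \<noteq> {}" "\<And>c. c \<in> C \<Longrightarrow> norm (c - u) \<le> R" "\<And>c. c \<in> C \<Longrightarrow> norm (c - v) \<le> R"
  shows "\<bar>min_sqdist C u - min_sqdist C v\<bar> \<le> 2 * R * norm (u - v)"
  unfolding min_sqdist_def
proof (rule abs_Min_image_diff_le[OF assms(1,2)])
  fix c assume "c \<in> C"
  from abs_norm_sq_diff_le[OF assms(3,4)[OF this]]
  show "\<bar>(norm (c - u))\<^sup>2 - (norm (c - v))\<^sup>2\<bar> \<le> 2 * R * norm (u - v)"
    by (simp add: norm_minus_commute)
qed

lemma min_sqdist_image_diff_le:
  assumes "finite K" "K \<noteq> {}" "\<And>i. i \<in> K \<Longrightarrow> norm (\<phi> i - y) \<le> R"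
    "\<And>i. i \<in> K \<Longrightarrow> norm (\<psi> i - y) \<le> R" "\<And>i. i \<in> K \<Longrightarrow> norm (\<phi> i - \<psi> i) \<le> \<delta>"
  shows "\<bar>min_sqdist (\<phi> ` K) y - min_sqdist (\<psi> ` K) y\<bar> \<le> 2 * R * \<delta>"
  unfolding min_sqdist_image
proof (rule abs_Min_image_diff_le[OF assms(1,2)])
  fix i assume i: "i \<in> K"
  have "\<bar>(norm (\<phi> i - y))\<^sup>2 - (norm (\<psi> i - y))\<^sup>2\<bar> \<le> 2 * R * norm (\<phi> i - \<psi> i)"
    using abs_norm_sq_diff_le[OF assms(3,4)[OF i]] by simp
  also have "\<dots> \<le> 2 * R * \<delta>"
    using order_trans[OF norm_ge_zero assms(3)[OF i]] assms(5)[OF i] by (intro mult_left_mono) auto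
  finally show "\<bar>(norm (\<phi> i - y))\<^sup>2 - (norm (\<psi> i - y))\<^sup>2\<bar> \<le> 2 * R * \<delta>" .
qed

lemma norm_le_card_mult_cart:
  fixes v :: "real^'p" and R :: real
  assumes "\<And>a. \<bar>v $ a\<bar> \<le> R"
  shows "norm v \<le> real CARD('p) * R"
proof -
  have "norm v \<le> (\<Sum>a\<in>UNIV. \<bar>v $ a\<bar>)" by (rule norm_le_l1_cart)
  also have "\<dots> \<le> (\<Sum>a\<in>(UNIV::'p set). R)" by (intro sum_mono assms)
  finally show ?thesis by simp
qed

lemma norm_diff_le_cube:
  fixes u v :: "real^'p" and b :: real
  assumes "\<And>a. \<bar>u $ a\<bar> \<le> b" "\<And>a. \<bar>v $ a\<bar> \<le> b"
  shows "norm (u - v) \<le> 2 * real CARD('p) * b"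
proof -
  have "\<bar>(u - v) $ a\<bar> \<le> 2 * b" for a
    using assms[of a] by (simp add: abs_le_iff)
  from norm_le_card_mult_cart[of "u - v", OF this] show ?thesis by simp
qed

lemma borel_measurable_vec_nth [measurable (raw)]:
  fixes f :: "'x \<Rightarrow> real^'p"
  assumes "f \<in> borel_measurable M"
  shows "(\<lambda>x. f x $ a) \<in> borel_measurable M"
  using measurable_compose[OF assms borel_measurable_continuous_onI[OF continuous_on_component[OF continuous_on_id]]]
  by simp

definition grid_round :: "real \<Rightarrow> real^'p \<Rightarrow> real^'p" where
  "grid_round h c = (\<chi> a. h * of_int \<lfloor>c $ a / h\<rfloor>)"

definition grid :: "real \<Rightarrow> int \<Rightarrow> (real^'p) set" where
  "grid h K = (\<lambda>z. \<chi> a. h * of_int (z a)) ` (UNIV \<rightarrow>\<^sub>E {-K..K})"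

lemma norm_grid_round_diff_le:
  fixes c :: "real^'p"
  assumes "h > 0"
  shows "norm (grid_round h c - c) \<le> real CARD('p) * h"
proof (rule norm_le_card_mult_cart)
  fix a
  have "h * \<lfloor>c $ a / h\<rfloor> \<le> h * (c $ a / h)" "h * (c $ a / h) < h * (\<lfloor>c $ a / h\<rfloor> + 1)"
    using assms by (intro mult_left_mono mult_strict_left_mono; linarith)+
  then show "\<bar>(grid_round h c - c) $ a\<bar> \<le> h"
    using assms unfolding grid_round_def by (simp add: algebra_simps)
qed

lemma grid_round_in_grid:
  fixes c :: "real^'p"
  assumes "h > 0" "\<And>a. \<bar>c $ a\<bar> \<le> of_int K * h"
  shows "grid_round h c \<in> grid h K"
proof -
  have "\<lfloor>c $ a / h\<rfloor> \<in> {-K..K}" for a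
  proof -
    have "- K \<le> c $ a / h" "c $ a / h \<le> K"
      using assms(2)[of a] assms(1) by (simp_all add: divide_le_eq le_divide_eq abs_le_iff)
    then show ?thesis by (simp add: le_floor_iff floor_le_iff)
  qed
  then show ?thesis unfolding grid_def grid_round_def by (intro image_eqI[OF refl]) auto
qed

lemma finite_grid: "finite (grid h K :: (real^'p) set)"
  unfolding grid_def by (intro finite_imageI finite_PiE) auto

lemma card_grid_le: "K \<ge> 0 \<Longrightarrow> card (grid h K :: (real^'p) set) \<le> nat (2 * K + 1) ^ CARD('p)"
  using card_image_le[OF finite_PiE[of "UNIV :: 'p set" "\<lambda>_. {-K..K}"]]
  unfolding grid_def by (simp add: card_PiE)

lemma grid_coord_bound:
  assumes "x \<in> grid h K" "h > 0"
  shows "\<bar>x $ a\<bar> \<le> of_int K * h"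
proof -
  obtain z where "z \<in> UNIV \<rightarrow>\<^sub>E {-K..K}" "x = (\<chi> a. h * of_int (z a))"
    using assms(1) unfolding grid_def by auto
  then have "z a \<in> {-K..K}" by auto
  then have "\<bar>z a\<bar> \<le> K" by auto
  then have "\<bar>of_int (z a)\<bar> \<le> (of_int K :: real)" by linarith
  then show ?thesis using \<open>x = _\<close> assms(2) by (simp add: abs_mult mult.commute mult_right_mono)
qed

lemma sum_linear_div_pow2_le: "(\<Sum>j<n. (2 * real j + 5) / 2^j) \<le> 14"
proof -
  have "(\<Sum>j<n. (2 * real j + 5) / 2^j) = 14 - 2 * (2 * real n + 7) / 2^n"
  proof (induction n)
    case (Suc n)
    then have "(\<Sum>j<Suc n. (2 * real j + 5) / 2^j) = 14 - 2 * (2 * real n + 7) / 2^n + (2 * real n + 5) / 2^n"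
      by simp
    also have "\<dots> = 14 - 2 * (2 * real (Suc n) + 7) / 2^(Suc n)"
      by (simp add: field_simps)
    finally show ?case .
  qed simp
  then show ?thesis by simp
qed

lemma inverse_pow2_le_inverse_sqrt: "n > 0 \<Longrightarrow> 1 / 2^n \<le> 1 / sqrt (real n)"
proof -
  assume n: "n > 0"
  have "sqrt (real n) \<le> real n"
    using n real_sqrt_le_mono[of "real n" "(real n)\<^sup>2"] by (simp add: power2_eq_square)
  also have "\<dots> \<le> 2^n" using of_nat_less_two_power[of n, where 'a=real] by linarith
  finally show ?thesis using n by (intro divide_left_mono) auto
qed

locale codebook_chaining =
  fixes P :: "'x measure" and y :: "'x \<Rightarrow> real^'p" and b :: real and k :: nat
  assumes prob_space_P: "prob_space P" and y_measurable [measurable]: "y \<in> borel_measurable P"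
    and y_bound: "\<And>x a. \<bar>y x $ a\<bar> \<le> b" and b_pos: "b > 0" and k_pos: "k > 0"
begin

interpretation P: prob_space P by (fact prob_space_P)

definition box :: "(nat \<Rightarrow> real^'p) set" where
  "box = {\<phi>. \<forall>i<k. \<forall>a. \<bar>\<phi> i $ a\<bar> \<le> b}"

definition scale :: "nat \<Rightarrow> real" where
  "scale j = b / 2^j"

definition level :: "nat \<Rightarrow> (nat \<Rightarrow> real^'p) set" where
  "level j = {..<k} \<rightarrow>\<^sub>E grid (scale j) (2^j)"

definition approx :: "(nat \<Rightarrow> real^'p) \<Rightarrow> nat \<Rightarrow> nat \<Rightarrow> real^'p" where
  "approx \<phi> j = (\<lambda>i\<in>{..<k}. grid_round (scale j) (\<phi> i))"

definition links :: "nat \<Rightarrow> ((nat \<Rightarrow> real^'p) \<times> (nat \<Rightarrow> real^'p)) set" where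
  "links j = {(\<phi>, \<psi>) \<in> level (Suc j) \<times> level j.
     \<forall>i<k. norm (\<phi> i - \<psi> i) \<le> 2 * real CARD('p) * scale j}"

definition loss :: "(nat \<Rightarrow> real^'p) \<Rightarrow> 'x \<Rightarrow> real" where
  "loss \<phi> x = min_sqdist (\<phi> ` {..<k}) (y x)"

definition coarse_dev :: "nat \<Rightarrow> (nat \<Rightarrow> 'x) \<Rightarrow> real" where
  "coarse_dev n xs = (MAX \<phi>\<in>level 0. emp_dev P n (loss \<phi>) xs)"

definition link_dev :: "nat \<Rightarrow> nat \<Rightarrow> (nat \<Rightarrow> 'x) \<Rightarrow> real" where
  "link_dev n j xs = (MAX q\<in>links j. emp_dev P n (\<lambda>x. loss (fst q) x - loss (snd q) x) xs)"

(* The last summand accounts for the distance between a codebook and its approximation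
   at level n. *)
definition envelope :: "nat \<Rightarrow> (nat \<Rightarrow> 'x) \<Rightarrow> real" where
  "envelope n xs = coarse_dev n xs + (\<Sum>j<n. link_dev n j xs) + 8 * real CARD('p)^2 * b^2 / 2^n"

lemma scale_pos: "scale j > 0"
  unfolding scale_def using b_pos by simp

lemma finite_level: "finite (level j)"
  unfolding level_def by (intro finite_PiE finite_grid) auto

lemma level_subset_box: "level j \<subseteq> box"
  using grid_coord_bound[OF _ scale_pos, of _ j "2^j"]
  unfolding level_def box_def scale_def by (auto simp: PiE_iff)

lemma approx_in_level: "\<phi> \<in> box \<Longrightarrow> approx \<phi> j \<in> level j"
  unfolding approx_def level_def box_def
  using scale_pos by (auto simp: scale_def intro!: grid_round_in_grid)

lemma norm_approx_diff_le: "i < k \<Longrightarrow> norm (approx \<phi> j i - \<phi> i) \<le> real CARD('p) * scale j"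
  unfolding approx_def using norm_grid_round_diff_le[OF scale_pos] by simp

lemma approx_in_links:
  assumes "\<phi> \<in> box"
  shows "(approx \<phi> (Suc j), approx \<phi> j) \<in> links j"
proof -
  have "norm (approx \<phi> (Suc j) i - approx \<phi> j i) \<le> 2 * real CARD('p) * scale j" if "i < k" for i
  proof -
    have "norm (approx \<phi> (Suc j) i - approx \<phi> j i)
        \<le> norm (approx \<phi> (Suc j) i - \<phi> i) + norm (approx \<phi> j i - \<phi> i)"
      using norm_triangle_ineq4[of "approx \<phi> (Suc j) i - \<phi> i" "approx \<phi> j i - \<phi> i"] by simp
    also have "\<dots> \<le> real CARD('p) * scale (Suc j) + real CARD('p) * scale j"
      using that by (intro add_mono norm_approx_diff_le)
    also have "\<dots> \<le> 2 * real CARD('p) * scale j"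
      unfolding scale_def using b_pos by (simp add: field_simps)
    finally show ?thesis .
  qed
  then show ?thesis unfolding links_def using approx_in_level[OF assms] by auto
qed

lemma finite_links: "finite (links j)"
  unfolding links_def using finite_level
  by (intro finite_subset[OF _ finite_cartesian_product[of "level (Suc j)" "level j"]]) auto

lemma links_nonempty: "links j \<noteq> {}"
  using approx_in_links[of "\<lambda>_. 0"] unfolding box_def using b_pos by auto

lemma level_nonempty: "level j \<noteq> {}"
  using approx_in_level[of "\<lambda>_. 0"] unfolding box_def using b_pos by auto

lemma norm_diff_y_le: "\<phi> \<in> box \<Longrightarrow> i < k \<Longrightarrow> norm (\<phi> i - y x) \<le> 2 * real CARD('p) * b"
  unfolding box_def using y_bound by (intro norm_diff_le_cube) auto

lemma loss_measurable [measurable]: "loss \<phi> \<in> borel_measurable P"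
  unfolding loss_def by measurable

lemma loss_abs_le: "\<phi> \<in> box \<Longrightarrow> \<bar>loss \<phi> x\<bar> \<le> 4 * real CARD('p)^2 * b^2"
proof -
  assume \<phi>: "\<phi> \<in> box"
  have "0 \<le> loss \<phi> x" unfolding loss_def using k_pos by (intro min_sqdist_nonneg) auto
  moreover have "loss \<phi> x \<le> (norm (\<phi> 0 - y x))\<^sup>2"
    unfolding loss_def using k_pos by (intro min_sqdist_le) auto
  moreover have "(norm (\<phi> 0 - y x))\<^sup>2 \<le> (2 * real CARD('p) * b)\<^sup>2"
    using norm_diff_y_le[OF \<phi> k_pos] by (intro power_mono) auto
  ultimately show ?thesis by (simp add: power_mult_distrib)
qed

lemma loss_integrable: "\<phi> \<in> box \<Longrightarrow> integrable P (loss \<phi>)"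
  using loss_abs_le by (intro P.integrable_const_bound[where B="4 * real CARD('p)^2 * b^2"] AE_I2) auto

lemma loss_diff_le:
  assumes "\<phi> \<in> box" "\<psi> \<in> box" "\<And>i. i < k \<Longrightarrow> norm (\<phi> i - \<psi> i) \<le> \<delta>"
  shows "\<bar>loss \<phi> x - loss \<psi> x\<bar> \<le> 4 * real CARD('p) * b * \<delta>"
proof -
  have "{..<k} \<noteq> {}" using k_pos by auto
  then show ?thesis
    using min_sqdist_image_diff_le[of "{..<k}" \<phi> "y x" "2 * real CARD('p) * b" \<psi> \<delta>]
      norm_diff_y_le assms unfolding loss_def by (auto simp: mult_ac)
qed

lemma link_loss_diff_le:
  assumes "q \<in> links j"
  shows "\<bar>loss (fst q) x - loss (snd q) x\<bar> \<le> 8 * real CARD('p)^2 * b^2 / 2^j"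
proof -
  have "\<bar>loss (fst q) x - loss (snd q) x\<bar> \<le> 4 * real CARD('p) * b * (2 * real CARD('p) * scale j)"
    using assms level_subset_box[of "Suc j"] level_subset_box[of j] unfolding links_def
    by (intro loss_diff_le) (auto dest: subsetD)
  then show ?thesis unfolding scale_def by (simp add: power2_eq_square mult_ac)
qed

lemma emp_dev_loss_le_envelope:
  assumes e: "e \<in> box" and n: "n > 0"
  shows "emp_dev P n (loss e) xs \<le> envelope n xs"
proof -
  define a where "a j = emp_dev P n (loss (approx e j)) xs" for j
  have approx_box: "approx e j \<in> box" for j
    using approx_in_level[OF e] level_subset_box by blast
  have first: "a 0 \<le> coarse_dev n xs"
    unfolding a_def coarse_dev_def using approx_in_level[OF e] finite_level by (intro Max_ge) auto
  have step: "a (Suc j) - a j \<le> link_dev n j xs" for j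
  proof -
    have "a (Suc j) - a j = emp_dev P n (\<lambda>x. loss (approx e (Suc j)) x - loss (approx e j) x) xs"
      unfolding a_def by (simp add: emp_dev_diff loss_integrable approx_box)
    then show ?thesis unfolding link_dev_def
      by (intro Max_ge finite_imageI finite_links image_eqI[OF _ approx_in_links[OF e]]) simp
  qed
  have last: "emp_dev P n (loss e) xs - a n \<le> 8 * real CARD('p)^2 * b^2 / 2^n"
  proof -
    have "\<bar>loss e x - loss (approx e n) x\<bar> \<le> 4 * real CARD('p) * b * (real CARD('p) * scale n)" for x
      using norm_approx_diff_le[of _ e n] by (intro loss_diff_le e approx_box) (simp add: norm_minus_commute)
    then have "\<bar>loss e x - loss (approx e n) x\<bar> \<le> 4 * real CARD('p)^2 * b^2 / 2^n" for x
      unfolding scale_def by (simp add: power2_eq_square mult_ac)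
    then have "\<bar>emp_dev P n (\<lambda>x. loss e x - loss (approx e n) x) xs\<bar> \<le> 2 * (4 * real CARD('p)^2 * b^2 / 2^n)"
      by (intro emp_dev_abs_le[OF prob_space_P _ n] Bochner_Integration.integrable_diff
          loss_integrable e approx_box) auto
    then show ?thesis unfolding a_def by (simp add: emp_dev_diff loss_integrable approx_box e)
  qed
  have "emp_dev P n (loss e) xs = a 0 + (\<Sum>j<n. a (Suc j) - a j) + (emp_dev P n (loss e) xs - a n)"
    by (simp add: sum_lessThan_telescope)
  also have "\<dots> \<le> envelope n xs"
    unfolding envelope_def by (intro add_mono first sum_mono step last)
  finally show ?thesis .
qed

lemma ln_card_level_le: "ln (card (level j)) \<le> real CARD('p) * real k * (real j + 2)"
proof -
  have "card (grid (scale j) (2^j) :: (real^'p) set) \<le> nat (2 * 2^j + 1) ^ CARD('p)"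
    by (rule card_grid_le) simp
  also have "nat (2 * 2^j + 1) ^ CARD('p) \<le> (2^(j+2)) ^ CARD('p)"
    by (intro power_mono) (simp_all add: nat_add_distrib nat_mult_distrib nat_power_eq)
  finally have "card (level j) \<le> ((2^(j+2)) ^ CARD('p)) ^ k"
    unfolding level_def by (simp add: card_PiE power_mono)
  then have "card (level j) \<le> (2::nat) ^ ((j+2) * CARD('p) * k)"
    unfolding power_mult .
  then have "real (card (level j)) \<le> 2 ^ ((j+2) * CARD('p) * k)"
    by (metis of_nat_le_iff of_nat_numeral of_nat_power)
  moreover have "card (level j) > 0"
    using finite_level level_nonempty by (simp add: card_gt_0_iff)
  ultimately have "ln (card (level j)) \<le> ln (2 ^ ((j+2) * CARD('p) * k))"
    by simp
  also have "\<dots> = real ((j+2) * CARD('p) * k) * ln 2"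
    by (simp add: ln_realpow)
  also have "\<dots> \<le> real ((j+2) * CARD('p) * k)"
    using ln_2_less_1 by (simp add: mult_left_le)
  finally show ?thesis by (simp add: algebra_simps)
qed

lemma ln_card_links_le: "ln (card (links j)) \<le> real CARD('p) * real k * (2 * real j + 5)"
proof -
  have "card (links j) \<le> card (level (Suc j) \<times> level j)"
    unfolding links_def using finite_level by (intro card_mono finite_cartesian_product) auto
  then have "real (card (links j)) \<le> real (card (level (Suc j))) * real (card (level j))"
    by (simp add: card_cartesian_product flip: of_nat_mult)
  moreover have "card (links j) > 0" "card (level (Suc j)) > 0" "card (level j) > 0"
    using finite_links links_nonempty finite_level level_nonempty by (simp_all add: card_gt_0_iff)
  ultimately have "ln (card (links j)) \<le> ln (real (card (level (Suc j))) * real (card (level j)))"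
    by (subst ln_le_cancel_iff) auto
  also have "\<dots> = ln (card (level (Suc j))) + ln (card (level j))"
    using \<open>card (level (Suc j)) > 0\<close> \<open>card (level j) > 0\<close> by (intro ln_mult_pos) auto
  also have "\<dots> \<le> real CARD('p) * real k * (real j + 3) + real CARD('p) * real k * (real j + 2)"
    using ln_card_level_le[of "Suc j"] ln_card_level_le[of j] by (intro add_mono) (simp_all add: add.commute)
  finally show ?thesis by (simp add: algebra_simps)
qed

lemma
  assumes n: "n > 0"
  shows coarse_dev_integrable: "integrable (PiM {..<n} (\<lambda>_. P)) (coarse_dev n)"
    and expected_coarse_dev_le: "(\<integral>xs. coarse_dev n xs \<partial>PiM {..<n} (\<lambda>_. P))
          \<le> 4 * real CARD('p)^2 * b^2 * (2 * real CARD('p) * k + 1) / sqrt n"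
proof -
  have bound: "\<bar>loss \<phi> x\<bar> \<le> 4 * real CARD('p)^2 * b^2" if "\<phi> \<in> level 0" for \<phi> x
    using loss_abs_le level_subset_box that by blast
  note Max_le = expected_Max_emp_dev_le[where f=loss and I="level 0", OF prob_space_P finite_level
      level_nonempty n _ loss_measurable bound]
  show "integrable (PiM {..<n} (\<lambda>_. P)) (coarse_dev n)"
    unfolding coarse_dev_def[abs_def] using Max_le(1) b_pos by simp
  have "(\<integral>xs. coarse_dev n xs \<partial>PiM {..<n} (\<lambda>_. P))
      \<le> 4 * real CARD('p)^2 * b^2 * (ln (card (level 0)) + 1/2) / sqrt n"
    unfolding coarse_dev_def using Max_le(2) b_pos by simp
  also have "\<dots> \<le> 4 * real CARD('p)^2 * b^2 * (2 * real CARD('p) * k + 1) / sqrt n"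
    using ln_card_level_le[of 0] by (intro divide_right_mono mult_left_mono) auto
  finally show "(\<integral>xs. coarse_dev n xs \<partial>PiM {..<n} (\<lambda>_. P))
      \<le> 4 * real CARD('p)^2 * b^2 * (2 * real CARD('p) * k + 1) / sqrt n" .
qed

lemma
  assumes n: "n > 0"
  shows link_dev_integrable: "integrable (PiM {..<n} (\<lambda>_. P)) (link_dev n j)"
    and expected_link_dev_le: "(\<integral>xs. link_dev n j xs \<partial>PiM {..<n} (\<lambda>_. P))
          \<le> 8 * real CARD('p)^2 * b^2 * (real CARD('p) * k + 1) * ((2 * real j + 5) / 2^j) / sqrt n"
proof -
  have link_measurable: "(\<lambda>x. loss (fst q) x - loss (snd q) x) \<in> borel_measurable P" for q
    by measurable
  note Max_le = expected_Max_emp_dev_le[where f="\<lambda>q x. loss (fst q) x - loss (snd q) x",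
      OF prob_space_P finite_links links_nonempty n _ link_measurable link_loss_diff_le]
  show "integrable (PiM {..<n} (\<lambda>_. P)) (link_dev n j)"
    unfolding link_dev_def[abs_def] using Max_le(1) b_pos by simp
  have "(\<integral>xs. link_dev n j xs \<partial>PiM {..<n} (\<lambda>_. P))
      \<le> 8 * real CARD('p)^2 * b^2 / 2^j * (ln (card (links j)) + 1/2) / sqrt n"
    unfolding link_dev_def using Max_le(2) b_pos by simp
  also have "\<dots> \<le> 8 * real CARD('p)^2 * b^2 / 2^j * ((real CARD('p) * k + 1) * (2 * real j + 5)) / sqrt n"
    using ln_card_links_le[of j] by (intro divide_right_mono mult_left_mono) (auto simp: algebra_simps)
  finally show "(\<integral>xs. link_dev n j xs \<partial>PiM {..<n} (\<lambda>_. P))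
      \<le> 8 * real CARD('p)^2 * b^2 * (real CARD('p) * k + 1) * ((2 * real j + 5) / 2^j) / sqrt n"
    by (simp add: field_simps)
qed

lemma
  assumes n: "n > 0"
  shows envelope_integrable: "integrable (PiM {..<n} (\<lambda>_. P)) (envelope n)"
    and expected_envelope_le:
      "(\<integral>xs. envelope n xs \<partial>PiM {..<n} (\<lambda>_. P)) \<le> 128 * real CARD('p)^2 * b^2 * (real CARD('p) * k + 1) / sqrt n"
proof -
  interpret Pn: prob_space "PiM {..<n} (\<lambda>_. P)" by (intro prob_space_PiM) (simp add: prob_space_P)
  let ?p = "real CARD('p)"
  show "integrable (PiM {..<n} (\<lambda>_. P)) (envelope n)"
    unfolding envelope_def[abs_def] using coarse_dev_integrable[OF n] link_dev_integrable[OF n]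
    by (intro Bochner_Integration.integrable_add Bochner_Integration.integrable_sum Pn.integrable_const) auto
  have "(\<integral>xs. envelope n xs \<partial>PiM {..<n} (\<lambda>_. P))
      = (\<integral>xs. coarse_dev n xs \<partial>PiM {..<n} (\<lambda>_. P)) + (\<Sum>j<n. \<integral>xs. link_dev n j xs \<partial>PiM {..<n} (\<lambda>_. P))
        + 8 * ?p^2 * b^2 / 2^n"
    unfolding envelope_def using coarse_dev_integrable[OF n] link_dev_integrable[OF n]
    by (simp add: Bochner_Integration.integral_add Bochner_Integration.integrable_sum
        Bochner_Integration.integral_sum Pn.prob_space)
  also have "\<dots> \<le> 4 * ?p^2 * b^2 * (2 * ?p * k + 1) / sqrt n
      + 8 * ?p^2 * b^2 * (?p * k + 1) * 14 / sqrt n + 8 * ?p^2 * b^2 / sqrt n"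
  proof (intro add_mono expected_coarse_dev_le[OF n])
    have "(\<Sum>j<n. \<integral>xs. link_dev n j xs \<partial>PiM {..<n} (\<lambda>_. P))
        \<le> (\<Sum>j<n. 8 * ?p^2 * b^2 * (?p * k + 1) * ((2 * real j + 5) / 2^j) / sqrt n)"
      by (intro sum_mono expected_link_dev_le[OF n])
    also have "\<dots> = 8 * ?p^2 * b^2 * (?p * k + 1) * (\<Sum>j<n. (2 * real j + 5) / 2^j) / sqrt n"
      by (simp add: sum_distrib_left sum_divide_distrib)
    also have "\<dots> \<le> 8 * ?p^2 * b^2 * (?p * k + 1) * 14 / sqrt n"
      using sum_linear_div_pow2_le[of n] by (intro divide_right_mono mult_left_mono) auto
    finally show "(\<Sum>j<n. \<integral>xs. link_dev n j xs \<partial>PiM {..<n} (\<lambda>_. P))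
        \<le> 8 * ?p^2 * b^2 * (?p * k + 1) * 14 / sqrt n" .
    show "8 * ?p^2 * b^2 / 2^n \<le> 8 * ?p^2 * b^2 / sqrt n"
      using mult_left_mono[OF inverse_pow2_le_inverse_sqrt[OF n], of "8 * ?p^2 * b^2"] by simp
  qed
  also have "\<dots> = (4 * ?p^2 * b^2 * (2 * ?p * k + 1) + 8 * ?p^2 * b^2 * (?p * k + 1) * 14
      + 8 * ?p^2 * b^2) / sqrt n"
    by (simp add: add_divide_distrib)
  also have "\<dots> \<le> 128 * ?p^2 * b^2 * (?p * k + 1) / sqrt n"
  proof (intro divide_right_mono)
    have "0 \<le> ?p^2 * b^2 * (?p * k)" "0 \<le> ?p^2 * b^2" by simp_all
    then show "4 * ?p^2 * b^2 * (2 * ?p * k + 1) + 8 * ?p^2 * b^2 * (?p * k + 1) * 14 + 8 * ?p^2 * b^2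
        \<le> 128 * ?p^2 * b^2 * (?p * k + 1)"
      by (simp add: algebra_simps)
  qed simp
  finally show "(\<integral>xs. envelope n xs \<partial>PiM {..<n} (\<lambda>_. P)) \<le> 128 * ?p^2 * b^2 * (?p * k + 1) / sqrt n" .
qed

lemma emp_dev_codebook_le_envelope:
  assumes "n > 0" "finite C" "card C = k" "\<And>c a. c \<in> C \<Longrightarrow> \<bar>c $ a\<bar> \<le> b"
  shows "emp_dev P n (\<lambda>x. min_sqdist C (y x)) xs \<le> envelope n xs"
proof -
  obtain e where "bij_betw e {0..<k} C"
    using ex_bij_betw_nat_finite[OF assms(2)] assms(3) by blast
  then have "e ` {..<k} = C" by (simp add: bij_betw_def atLeast0LessThan)
  then have "e \<in> box" "loss e = (\<lambda>x. min_sqdist C (y x))"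
    using assms(4) unfolding box_def loss_def by auto
  then show ?thesis using emp_dev_loss_le_envelope[OF _ assms(1)] by metis
qed

end

lemma L1norm_nonneg: "0 \<le> L1norm P f"
  unfolding L1norm_def by (intro integral_nonneg_AE AE_I2) simp

lemma supnorm_nonneg:
  assumes "X \<noteq> {}" "bdd_above ((\<lambda>x. \<bar>f x\<bar>) ` X)"
  shows "0 \<le> supnorm X f"
proof -
  obtain x where "x \<in> X" using assms(1) by auto
  then have "\<bar>f x\<bar> \<le> supnorm X f" unfolding supnorm_def by (intro cSUP_upper assms(2))
  then show ?thesis by linarith
qed

lemma L1norm_le_rem_R1:
  fixes mu muh :: "'x \<Rightarrow> real^'p"
  assumes "\<kappa> > 0" "X \<noteq> {}" "\<And>a. bdd_above ((\<lambda>x. \<bar>muh x $ a - mu x $ a\<bar>) ` X)"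
  shows "L1norm P (\<lambda>x. muh x $ a - mu x $ a) \<le> rem_R1 P X mu muh \<kappa> \<alpha>"
proof -
  define L where "L a = L1norm P (\<lambda>x. muh x $ a - mu x $ a)" for a
  define S where "S a = supnorm X (\<lambda>x. muh x $ a - mu x $ a)" for a
  have "0 \<le> S a * L a" unfolding S_def L_def using assms by (intro mult_nonneg_nonneg supnorm_nonneg L1norm_nonneg)
  also have "\<dots> \<le> (MAX a. S a * L a)" by (intro Max_ge) auto
  finally have "0 \<le> (1 / \<kappa>) * (MAX a. S a * L a)" using assms(1) by simp
  moreover have "L a \<le> (MAX a. L a)" by (intro Max_ge) auto
  ultimately show ?thesis
    unfolding rem_R1_def L_def[symmetric] S_def[symmetric] using powr_ge_zero[of "MAX a. S a" "\<alpha> + 1"]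
    by linarith
qed

lemma emeasure_abs_gt_le:
  assumes P: "prob_space P" and u: "integrable P u" "\<And>x. x \<in> space P \<Longrightarrow> 0 \<le> u x"
    and le: "(\<integral>x. u x \<partial>P) \<le> c * r" and r: "0 < r" and M: "M > 0"
  shows "emeasure P {x \<in> space P. \<bar>u x\<bar> > M * r} \<le> ennreal (c / M)"
proof -
  interpret prob_space P by (fact P)
  define A where "A = {x \<in> space P. M * r \<le> u x}"
  have A_sets: "A \<in> sets P"
    unfolding A_def using borel_measurable_integrable[OF u(1)] by measurable
  have "measure P A \<le> (\<integral>x. u x \<partial>P) / (M * r)"
    unfolding A_def using u M r by (intro integral_Markov_inequality_measure[OF _ sets.top]) (auto intro!: AE_I2)
  also have "\<dots> \<le> c * r / (M * r)"
    using le M r by (intro divide_right_mono) auto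
  also have "\<dots> = c / M" using r by simp
  finally have "measure P A \<le> c / M" .
  have "emeasure P {x \<in> space P. \<bar>u x\<bar> > M * r} \<le> emeasure P A"
    using u(2) A_sets unfolding A_def by (intro emeasure_mono) auto
  also have "\<dots> = ennreal (measure P A)" by (rule emeasure_eq_measure)
  also have "\<dots> \<le> ennreal (c / M)" by (rule ennreal_leI) fact
  finally show ?thesis .
qed

lemma measure_pair_abs_gt_le:
  fixes u :: "'a \<Rightarrow> 'b \<Rightarrow> real" and r :: "'a \<Rightarrow> real"
  assumes Q: "prob_space Q" and P: "prob_space P" and M: "M > 0" and c: "c \<ge> 0"
    and cond: "AE \<omega> in Q. integrable P (u \<omega>) \<and> (\<forall>x\<in>space P. 0 \<le> u \<omega> x)
      \<and> (\<integral>x. u \<omega> x \<partial>P) \<le> c * r \<omega> \<and> 0 < r \<omega>"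
  shows "measure (Q \<Otimes>\<^sub>M P) {z \<in> space (Q \<Otimes>\<^sub>M P). \<bar>u (fst z) (snd z)\<bar> > M * r (fst z)} \<le> c / M"
    (is "measure _ ?S \<le> _")
proof (cases "?S \<in> sets (Q \<Otimes>\<^sub>M P)")
  case False
  then show ?thesis using M c by (simp add: measure_notin_sets)
next
  case True
  interpret Q: prob_space Q by (fact Q)
  interpret P: prob_space P by (fact P)
  interpret QP: prob_space "Q \<Otimes>\<^sub>M P" by (intro prob_space_pair Q P)
  have "emeasure (Q \<Otimes>\<^sub>M P) ?S = (\<integral>\<^sup>+\<omega>. emeasure P (Pair \<omega> -` ?S) \<partial>Q)"
    by (rule P.emeasure_pair_measure_alt[OF True])
  also have "\<dots> \<le> (\<integral>\<^sup>+\<omega>. ennreal (c / M) \<partial>Q)"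
  proof (rule nn_integral_mono_AE)
    show "AE \<omega> in Q. emeasure P (Pair \<omega> -` ?S) \<le> ennreal (c / M)"
      using cond AE_space
    proof eventually_elim
      case (elim \<omega>)
      then have "Pair \<omega> -` ?S = {x \<in> space P. \<bar>u \<omega> x\<bar> > M * r \<omega>}"
        by (auto simp: space_pair_measure)
      with elim show ?case by (simp add: emeasure_abs_gt_le[OF P _ _ _ _ M])
    qed
  qed
  also have "\<dots> = ennreal (c / M)" by (simp add: Q.emeasure_space_1)
  finally have "ennreal (measure (Q \<Otimes>\<^sub>M P) ?S) \<le> ennreal (c / M)"
    by (simp add: QP.emeasure_eq_measure)
  then show ?thesis using M c by (simp add: ennreal_le_iff)
qed

lemma inverse_sqrt_le_sqrt_ln_div:
  assumes "3 \<le> n"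
  shows "1 / sqrt (real n) \<le> sqrt (ln (real n) / real n)"
proof -
  have "exp 1 \<le> real n" using exp_le assms by linarith
  then have "1 \<le> ln (real n)" using assms by (simp add: ln_ge_iff)
  then have "1 / real n \<le> ln (real n) / real n" by (simp add: divide_right_mono)
  then have "sqrt (1 / real n) \<le> sqrt (ln (real n) / real n)" by (rule real_sqrt_le_mono)
  then show ?thesis by (simp add: real_sqrt_divide)
qed

lemma rates_from_conditional_mean_bound:
  fixes u :: "nat \<Rightarrow> 'a \<Rightarrow> 'b \<Rightarrow> real" and r :: "nat \<Rightarrow> 'a \<Rightarrow> real" and P :: "nat \<Rightarrow> 'b measure"
  assumes Q: "prob_space Q" and P: "\<And>n. prob_space (P n)" and c: "c > 0"
    and cond: "\<And>n s. n \<ge> 1 \<Longrightarrow> 1 / sqrt n \<le> s \<Longrightarrow> 0 < s \<Longrightarrow> AE \<omega> in Q.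
      integrable (P n) (u n \<omega>) \<and> (\<forall>x\<in>space (P n). 0 \<le> u n \<omega> x)
      \<and> (\<integral>x. u n \<omega> x \<partial>P n) \<le> c * (s + r n \<omega>) \<and> 0 < s + r n \<omega>"
  shows "(\<exists>c N. \<forall>n\<ge>N. AE \<omega> in Q. (\<integral>x. u n \<omega> x \<partial>P n) \<le> c * (1 / sqrt (real n) + r n \<omega>))
    \<and> (\<forall>\<epsilon>>0. \<exists>M N. \<forall>n\<ge>N.
         measure (Q \<Otimes>\<^sub>M P n) {z \<in> space (Q \<Otimes>\<^sub>M P n).
           \<bar>u n (fst z) (snd z)\<bar> > M * (sqrt (ln (real n) / real n) + r n (fst z))} \<le> \<epsilon>)"
proof (intro conjI allI impI)
  show "\<exists>c N. \<forall>n\<ge>N. AE \<omega> in Q. (\<integral>x. u n \<omega> x \<partial>P n) \<le> c * (1 / sqrt (real n) + r n \<omega>)"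
    using cond[of _ "1 / sqrt _"] by (intro exI[of _ c] exI[of _ 1]) (auto elim: eventually_mono)
  fix \<epsilon> :: real assume \<epsilon>: "\<epsilon> > 0"
  have "measure (Q \<Otimes>\<^sub>M P n) {z \<in> space (Q \<Otimes>\<^sub>M P n).
      \<bar>u n (fst z) (snd z)\<bar> > c / \<epsilon> * (sqrt (ln (real n) / real n) + r n (fst z))} \<le> c / (c / \<epsilon>)"
    if n: "n \<ge> 3" for n
  proof (rule measure_pair_abs_gt_le[OF Q P])
    have "0 < 1 / sqrt n" using n by simp
    with inverse_sqrt_le_sqrt_ln_div[OF n] n show "AE \<omega> in Q. integrable (P n) (u n \<omega>)
        \<and> (\<forall>x\<in>space (P n). 0 \<le> u n \<omega> x)
        \<and> (\<integral>x. u n \<omega> x \<partial>P n) \<le> c * (sqrt (ln (real n) / real n) + r n \<omega>)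
        \<and> 0 < sqrt (ln (real n) / real n) + r n \<omega>"
      by (intro cond) auto
  qed (use c \<epsilon> in auto)
  then show "\<exists>M N. \<forall>n\<ge>N. measure (Q \<Otimes>\<^sub>M P n) {z \<in> space (Q \<Otimes>\<^sub>M P n).
      \<bar>u n (fst z) (snd z)\<bar> > M * (sqrt (ln (real n) / real n) + r n (fst z))} \<le> \<epsilon>"
    using c by (intro exI[of _ "c / \<epsilon>"] exI[of _ 3]) simp
qed

locale plugin_clustering =
  fixes P :: "'x measure" and X :: "'x set" and mu muh :: "'x \<Rightarrow> real^'p"
    and k n :: nat and b :: real
    and Chat :: "(nat \<Rightarrow> 'x) \<Rightarrow> (real^'p) set" and Cstar :: "(real^'p) set"
  assumes prob_space_P: "prob_space P" and X_sets: "X \<in> sets P" and AE_X: "AE x in P. x \<in> X"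
    and mu_measurable [measurable]: "mu \<in> borel_measurable P"
    and muh_measurable [measurable]: "muh \<in> borel_measurable P"
    and mu_bound: "\<And>x a. x \<in> X \<Longrightarrow> \<bar>mu x $ a\<bar> \<le> b"
    and muh_bound: "\<And>x a. x \<in> X \<Longrightarrow> \<bar>muh x $ a\<bar> \<le> b"
    and b_pos: "b > 0" and k_pos: "k > 0" and n_pos: "n > 0"
    and Chat_min: "\<And>xs. xs \<in> space (PiM {..<n} (\<lambda>_. P)) \<Longrightarrow> Chat xs \<in> codebooks mu X k \<and>
        (\<forall>C\<in>codebooks mu X k. emp_risk n muh xs (Chat xs) \<le> emp_risk n muh xs C)"
    and Chat_measurable: "(\<lambda>xs. clust_risk P mu (Chat xs)) \<in> borel_measurable (PiM {..<n} (\<lambda>_. P))"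
    and Cstar: "Cstar \<in> optimal_codebooks P mu X k"
begin

interpretation P: prob_space P by (fact prob_space_P)

abbreviation Pn :: "(nat \<Rightarrow> 'x) measure" where
  "Pn \<equiv> PiM {..<n} (\<lambda>_. P)"

interpretation Pn: prob_space Pn by (intro prob_space_PiM) (simp add: prob_space_P)

(* Clipping makes the estimate bounded everywhere, as the chaining requires, without changing
   the empirical risk of samples in X, which is almost every sample. *)
definition muh_clip :: "'x \<Rightarrow> real^'p" where
  "muh_clip x = (if x \<in> X then muh x else 0)"

definition plugin_risk :: "(real^'p) set \<Rightarrow> real" where
  "plugin_risk C = (\<integral>x. min_sqdist C (muh_clip x) \<partial>P)"

definition excess :: "(nat \<Rightarrow> 'x) \<Rightarrow> real" where
  "excess xs = clust_risk P mu (Chat xs) - clust_risk P mu Cstar"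

definition L1_error :: real where
  "L1_error = (\<Sum>a\<in>UNIV. L1norm P (\<lambda>x. muh x $ a - mu x $ a))"

lemma muh_clip_measurable [measurable]: "muh_clip \<in> borel_measurable P"
  unfolding muh_clip_def using X_sets by measurable

lemma muh_clip_bound: "\<bar>muh_clip x $ a\<bar> \<le> b"
  unfolding muh_clip_def using muh_bound b_pos by auto

interpretation chaining: codebook_chaining P muh_clip b k
  by unfold_locales (use prob_space_P muh_clip_bound b_pos k_pos in auto)

lemma Cstar_codebook: "Cstar \<in> codebooks mu X k"
  using Cstar unfolding optimal_codebooks_def by auto

lemma
  assumes "C \<in> codebooks mu X k"
  shows codebook_finite: "finite C" and codebook_nonempty: "C \<noteq> {}" and codebook_card: "card C = k"
    and codebook_bound: "\<And>c a. c \<in> C \<Longrightarrow> \<bar>c $ a\<bar> \<le> b"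
  using assms k_pos mu_bound unfolding codebooks_def by auto

lemma min_sqdist_abs_le:
  assumes "C \<in> codebooks mu X k" "\<And>a. \<bar>v $ a\<bar> \<le> b"
  shows "\<bar>min_sqdist C v\<bar> \<le> (2 * real CARD('p) * b)\<^sup>2"
proof -
  obtain c where "c \<in> C" using codebook_nonempty[OF assms(1)] by auto
  then have "min_sqdist C v \<le> (norm (c - v))\<^sup>2"
    using codebook_finite[OF assms(1)] by (intro min_sqdist_le)
  also have "\<dots> \<le> (2 * real CARD('p) * b)\<^sup>2"
    using codebook_bound[OF assms(1) \<open>c \<in> C\<close>] assms(2) by (intro power_mono norm_diff_le_cube) auto
  finally show ?thesis
    using min_sqdist_nonneg[OF codebook_finite[OF assms(1)] codebook_nonempty[OF assms(1)]] by simp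
qed

lemma min_sqdist_mu_integrable:
  "C \<in> codebooks mu X k \<Longrightarrow> integrable P (\<lambda>x. min_sqdist C (mu x))"
  using AE_X min_sqdist_abs_le[OF _ mu_bound] codebook_finite
  by (intro P.integrable_const_bound[where B="(2 * real CARD('p) * b)\<^sup>2"])
     (auto elim!: eventually_mono)

lemma min_sqdist_muh_clip_integrable:
  "C \<in> codebooks mu X k \<Longrightarrow> integrable P (\<lambda>x. min_sqdist C (muh_clip x))"
  using min_sqdist_abs_le[OF _ muh_clip_bound] codebook_finite
  by (intro P.integrable_const_bound[where B="(2 * real CARD('p) * b)\<^sup>2"] AE_I2) auto

lemma clust_risk_eq:
  assumes "C \<in> codebooks mu X k"
  shows "clust_risk P mu C = (\<integral>x. min_sqdist C (mu x) \<partial>P)"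
  unfolding clust_risk_def
  using norm_diff_proj_sq[OF codebook_finite[OF assms] codebook_nonempty[OF assms]] by simp

lemma abs_clust_risk_le:
  assumes "C \<in> codebooks mu X k"
  shows "\<bar>clust_risk P mu C\<bar> \<le> (2 * real CARD('p) * b)\<^sup>2"
proof -
  have "\<bar>clust_risk P mu C\<bar> \<le> (\<integral>x. \<bar>min_sqdist C (mu x)\<bar> \<partial>P)"
    unfolding clust_risk_eq[OF assms] by (rule integral_abs_bound)
  also have "\<dots> \<le> (\<integral>x. (2 * real CARD('p) * b)\<^sup>2 \<partial>P)"
    using AE_X min_sqdist_abs_le[OF assms mu_bound] min_sqdist_mu_integrable[OF assms]
    by (intro integral_mono_AE) (auto elim!: eventually_mono)
  finally show ?thesis by (simp add: P.prob_space)
qed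

lemma emp_risk_eq:
  assumes "C \<in> codebooks mu X k" "\<And>t. t < n \<Longrightarrow> xs t \<in> X"
  shows "emp_risk n muh xs C = (\<Sum>t<n. min_sqdist C (muh_clip (xs t))) / real n"
  unfolding emp_risk_def muh_clip_def
  using assms norm_diff_proj_sq[OF codebook_finite[OF assms(1)] codebook_nonempty[OF assms(1)]] by simp

lemma plugin_risk_minus_emp_risk:
  assumes "C \<in> codebooks mu X k" "\<And>t. t < n \<Longrightarrow> xs t \<in> X"
  shows "plugin_risk C - emp_risk n muh xs C = emp_dev P n (\<lambda>x. min_sqdist C (muh_clip x)) xs"
  unfolding plugin_risk_def emp_dev_def by (simp add: emp_risk_eq[of C xs, OF assms])

lemma abs_diff_integrable: "integrable P (\<lambda>x. \<bar>muh x $ a - mu x $ a\<bar>)"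
proof -
  have "\<bar>muh x $ a - mu x $ a\<bar> \<le> 2 * b" if "x \<in> X" for x
    using muh_bound[OF that, of a] mu_bound[OF that, of a] by (simp add: abs_le_iff)
  then show ?thesis
    using AE_X by (intro P.integrable_const_bound[where B="2 * b"]) (auto elim!: eventually_mono)
qed

lemma abs_clust_risk_minus_plugin_risk_le:
  assumes C: "C \<in> codebooks mu X k"
  shows "\<bar>clust_risk P mu C - plugin_risk C\<bar> \<le> 4 * real CARD('p) * b * L1_error"
proof -
  have pointwise: "\<bar>min_sqdist C (mu x) - min_sqdist C (muh_clip x)\<bar>
      \<le> 4 * real CARD('p) * b * (\<Sum>a\<in>UNIV. \<bar>muh x $ a - mu x $ a\<bar>)" if "x \<in> X" for x
  proof -
    have "\<bar>min_sqdist C (mu x) - min_sqdist C (muh_clip x)\<bar> \<le> 2 * (2 * real CARD('p) * b) * norm (mu x - muh_clip x)"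
      using codebook_bound[OF C] mu_bound[OF that] muh_clip_bound
      by (intro min_sqdist_lipschitz codebook_finite[OF C] codebook_nonempty[OF C] norm_diff_le_cube)
    also have "norm (mu x - muh_clip x) \<le> (\<Sum>a\<in>UNIV. \<bar>muh x $ a - mu x $ a\<bar>)"
      using norm_le_l1_cart[of "mu x - muh_clip x"] that unfolding muh_clip_def by (simp add: abs_minus_commute)
    finally show ?thesis using b_pos by (simp add: mult_left_mono)
  qed
  have "\<bar>clust_risk P mu C - plugin_risk C\<bar> = \<bar>\<integral>x. min_sqdist C (mu x) - min_sqdist C (muh_clip x) \<partial>P\<bar>"
    unfolding clust_risk_eq[OF C] plugin_risk_def
    using min_sqdist_mu_integrable[OF C] min_sqdist_muh_clip_integrable[OF C] by simp
  also have "\<dots> \<le> (\<integral>x. \<bar>min_sqdist C (mu x) - min_sqdist C (muh_clip x)\<bar> \<partial>P)"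
    by (rule integral_abs_bound)
  also have "\<dots> \<le> (\<integral>x. 4 * real CARD('p) * b * (\<Sum>a\<in>UNIV. \<bar>muh x $ a - mu x $ a\<bar>) \<partial>P)"
    using AE_X pointwise min_sqdist_mu_integrable[OF C] min_sqdist_muh_clip_integrable[OF C] abs_diff_integrable
    by (intro integral_mono_AE) (auto elim!: eventually_mono)
  also have "\<dots> = 4 * real CARD('p) * b * L1_error"
    unfolding L1_error_def L1norm_def using abs_diff_integrable by simp
  finally show ?thesis .
qed

lemma excess_le_envelope:
  assumes xs: "xs \<in> space Pn" "\<And>t. t < n \<Longrightarrow> xs t \<in> X"
  shows "excess xs \<le> chaining.envelope n xs - emp_dev P n (\<lambda>x. min_sqdist Cstar (muh_clip x)) xs
           + 8 * real CARD('p) * b * L1_error"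
proof -
  define C where "C = Chat xs"
  have C: "C \<in> codebooks mu X k" and emp_min: "emp_risk n muh xs C \<le> emp_risk n muh xs Cstar"
    using Chat_min[OF xs(1)] Cstar_codebook unfolding C_def by auto
  have "plugin_risk C - plugin_risk Cstar
      = emp_dev P n (\<lambda>x. min_sqdist C (muh_clip x)) xs + (emp_risk n muh xs C - emp_risk n muh xs Cstar)
        - emp_dev P n (\<lambda>x. min_sqdist Cstar (muh_clip x)) xs"
    using plugin_risk_minus_emp_risk[of C xs, OF C xs(2)]
      plugin_risk_minus_emp_risk[of Cstar xs, OF Cstar_codebook xs(2)]
    by simp
  also have "\<dots> \<le> chaining.envelope n xs - emp_dev P n (\<lambda>x. min_sqdist Cstar (muh_clip x)) xs"
    using emp_min chaining.emp_dev_codebook_le_envelope[OF n_pos codebook_finite[OF C]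
        codebook_card[OF C] codebook_bound[OF C], where xs=xs] by simp
  finally show ?thesis
    using abs_clust_risk_minus_plugin_risk_le[OF C] abs_clust_risk_minus_plugin_risk_le[OF Cstar_codebook]
    unfolding excess_def C_def by (simp add: abs_le_iff)
qed

lemma excess_measurable: "excess \<in> borel_measurable Pn"
  unfolding excess_def using Chat_measurable by measurable

lemma excess_nonneg: "xs \<in> space Pn \<Longrightarrow> 0 \<le> excess xs"
  using Chat_min Cstar unfolding excess_def optimal_codebooks_def by auto

lemma excess_integrable: "integrable Pn excess"
  using Chat_min abs_clust_risk_le[OF Cstar_codebook] abs_clust_risk_le excess_measurable
  unfolding excess_def
  by (intro Pn.integrable_const_bound[where B="2 * (2 * real CARD('p) * b)\<^sup>2"] AE_I2) fastforce+

lemma expected_excess_le: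
  "(\<integral>xs. excess xs \<partial>Pn) \<le> 128 * real CARD('p)^2 * b^2 * (real CARD('p) * k + 1) / sqrt n
     + 8 * real CARD('p) * b * L1_error"
proof -
  have AE_sample: "AE xs in Pn. \<forall>t\<in>{..<n}. xs t \<in> X"
    using AE_X by (intro AE_finite_allI AE_PiM_component[where P="\<lambda>x. x \<in> X"] prob_space_P) auto
  have Cstar_int: "integrable P (\<lambda>x. min_sqdist Cstar (muh_clip x))"
    by (rule min_sqdist_muh_clip_integrable[OF Cstar_codebook])
  have Cstar_dev_int: "integrable Pn (emp_dev P n (\<lambda>x. min_sqdist Cstar (muh_clip x)))"
    using min_sqdist_abs_le[OF Cstar_codebook muh_clip_bound] codebook_finite[OF Cstar_codebook]
    by (intro emp_dev_integrable[OF prob_space_P _ _ n_pos]) auto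
  have "(\<integral>xs. excess xs \<partial>Pn) \<le> (\<integral>xs. chaining.envelope n xs - emp_dev P n (\<lambda>x. min_sqdist Cstar (muh_clip x)) xs
           + 8 * real CARD('p) * b * L1_error \<partial>Pn)"
  proof (intro integral_mono_AE excess_integrable)
    show "AE xs in Pn. excess xs \<le> chaining.envelope n xs - emp_dev P n (\<lambda>x. min_sqdist Cstar (muh_clip x)) xs
        + 8 * real CARD('p) * b * L1_error"
      using AE_sample AE_space by eventually_elim (auto intro: excess_le_envelope)
  qed (use chaining.envelope_integrable[OF n_pos] Cstar_dev_int in auto)
  also have "\<dots> = (\<integral>xs. chaining.envelope n xs \<partial>Pn) + 8 * real CARD('p) * b * L1_error"
    using chaining.envelope_integrable[OF n_pos] Cstar_dev_int
      expected_emp_dev_eq_0[OF prob_space_P Cstar_int n_pos]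
    by (simp add: Pn.prob_space)
  also have "\<dots> \<le> 128 * real CARD('p)^2 * b^2 * (real CARD('p) * k + 1) / sqrt n
     + 8 * real CARD('p) * b * L1_error"
    using chaining.expected_envelope_le[OF n_pos] by simp
  finally show ?thesis .
qed

lemma X_nonempty: "X \<noteq> {}"
  using AE_X prob_space.AE_False[OF prob_space_P] by auto

lemma
  assumes "\<kappa> > 0"
  shows L1_error_le_rem_R1: "L1_error \<le> real CARD('p) * rem_R1 P X mu muh \<kappa> \<alpha>"
    and rem_R1_nonneg: "0 \<le> rem_R1 P X mu muh \<kappa> \<alpha>"
proof -
  have bdd: "bdd_above ((\<lambda>x. \<bar>muh x $ a - mu x $ a\<bar>) ` X)" for a
  proof (rule bdd_aboveI2)
    fix x assume "x \<in> X"
    then show "\<bar>muh x $ a - mu x $ a\<bar> \<le> 2 * b"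
      using muh_bound[of x a] mu_bound[of x a] by (simp add: abs_le_iff)
  qed
  note L1_le = L1norm_le_rem_R1[OF assms X_nonempty bdd]
  show "L1_error \<le> real CARD('p) * rem_R1 P X mu muh \<kappa> \<alpha>"
  proof -
    have "L1_error \<le> of_nat (card (UNIV :: 'p set)) * rem_R1 P X mu muh \<kappa> \<alpha>"
      unfolding L1_error_def by (rule sum_bounded_above) (rule L1_le)
    then show ?thesis by simp
  qed
  show "0 \<le> rem_R1 P X mu muh \<kappa> \<alpha>"
    using L1_le L1norm_nonneg order_trans by blast
qed

lemma expected_excess_le_rem_R1:
  assumes "\<kappa> > 0"
  shows "(\<integral>xs. excess xs \<partial>Pn) \<le> (128 * real CARD('p)^2 * b^2 * (real CARD('p) * k + 1)
     + 8 * real CARD('p)^2 * b) * (1 / sqrt n + rem_R1 P X mu muh \<kappa> \<alpha>)"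
proof -
  let ?K = "128 * real CARD('p)^2 * b^2 * (real CARD('p) * k + 1)"
    and ?c = "128 * real CARD('p)^2 * b^2 * (real CARD('p) * k + 1) + 8 * real CARD('p)^2 * b"
    and ?r = "rem_R1 P X mu muh \<kappa> \<alpha>"
  have "(\<integral>xs. excess xs \<partial>Pn) \<le> ?K / sqrt n + 8 * real CARD('p) * b * L1_error"
    by (rule expected_excess_le)
  also have "\<dots> \<le> ?K / sqrt n + 8 * real CARD('p)^2 * b * ?r"
    using mult_left_mono[OF L1_error_le_rem_R1[OF assms], of "8 * real CARD('p) * b"] b_pos
    by (simp add: power2_eq_square mult_ac)
  also have "\<dots> \<le> ?c / sqrt n + ?c * ?r"
    using b_pos rem_R1_nonneg[OF assms]
    by (intro add_mono divide_right_mono mult_right_mono) auto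
  finally show ?thesis by (simp add: distrib_left)
qed

lemma conditional_excess_bound:
  assumes "\<kappa> > 0" "1 / sqrt n \<le> s" "0 < s"
  shows "integrable Pn excess \<and> (\<forall>xs\<in>space Pn. 0 \<le> excess xs)
    \<and> (\<integral>xs. excess xs \<partial>Pn) \<le> (128 * real CARD('p)^2 * b^2 * (real CARD('p) * k + 1)
          + 8 * real CARD('p)^2 * b) * (s + rem_R1 P X mu muh \<kappa> \<alpha>)
    \<and> 0 < s + rem_R1 P X mu muh \<kappa> \<alpha>"
proof -
  let ?c = "128 * real CARD('p)^2 * b^2 * (real CARD('p) * k + 1) + 8 * real CARD('p)^2 * b"
  have "?c * (1 / sqrt n + rem_R1 P X mu muh \<kappa> \<alpha>) \<le> ?c * (s + rem_R1 P X mu muh \<kappa> \<alpha>)"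
    using assms(2) b_pos by (intro mult_left_mono) auto
  then show ?thesis
    using excess_integrable excess_nonneg expected_excess_le_rem_R1[OF assms(1), of \<alpha>]
      rem_R1_nonneg[OF assms(1), of \<alpha>] assms(3) by auto
qed

end

theorem theorem1:
  fixes PX :: "(real^'d) measure" and Xset :: "(real^'d) set"
    and mu :: "real^'d \<Rightarrow> real^'p"
    and Q :: "'w measure"
    and muhat :: "nat \<Rightarrow> 'w \<Rightarrow> real^'d \<Rightarrow> real^'p"
    and Chat :: "nat \<Rightarrow> 'w \<Rightarrow> (nat \<Rightarrow> real^'d) \<Rightarrow> (real^'p) set"
    and Cstar :: "(real^'p) set"
    and k :: nat and \<kappa> \<alpha> B :: real
  assumes PX: "prob_space PX" "sets PX = sets borel"
    and Xset: "Xset \<in> sets borel" "AE x in PX. x \<in> Xset"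
    and Q: "prob_space Q"
    and mu_meas: "mu \<in> borel_measurable PX"
    and muhat_meas: "\<And>n. (\<lambda>(\<omega>, x). muhat n \<omega> x) \<in> borel_measurable (Q \<Otimes>\<^sub>M PX)"
    and sup_meas: "\<And>n a. (\<lambda>\<omega>. supnorm Xset (\<lambda>x. muhat n \<omega> x $ a - mu x $ a)) \<in> borel_measurable Q"
    and k: "k \<ge> 1"
    and Chat_min: "\<And>n \<omega> xs. \<omega> \<in> space Q \<Longrightarrow> xs \<in> space (PiM {..<n} (\<lambda>_. PX)) \<Longrightarrow>
        Chat n \<omega> xs \<in> codebooks mu Xset k \<and>
        (\<forall>C\<in>codebooks mu Xset k. emp_risk n (muhat n \<omega>) xs (Chat n \<omega> xs) \<le> emp_risk n (muhat n \<omega>) xs C)"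
    and Chat_meas: "\<And>n. (\<lambda>(\<omega>, xs). clust_risk PX mu (Chat n \<omega> xs))
        \<in> borel_measurable (Q \<Otimes>\<^sub>M PiM {..<n} (\<lambda>_. PX))"
    and Cstar: "Cstar \<in> optimal_codebooks PX mu Xset k"
    and margin: "margin_condition PX mu Xset k \<kappa> \<alpha>"
    and A1_mu: "\<And>a x. x \<in> Xset \<Longrightarrow> \<bar>mu x $ a\<bar> \<le> B"
    and A1_muhat: "\<And>n. AE \<omega> in Q. \<forall>a. \<forall>x\<in>Xset. \<bar>muhat n \<omega> x $ a\<bar> \<le> B"
    and A2: "\<And>\<epsilon>. \<epsilon> > 0 \<Longrightarrow>
        (\<lambda>n. measure Q {\<omega> \<in> space Q. (MAX a. supnorm Xset (\<lambda>x. muhat n \<omega> x $ a - mu x $ a)) > \<epsilon>})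
          \<longlonglongrightarrow> 0"
  shows "(\<exists>c N. \<forall>n\<ge>N. AE \<omega> in Q.
            (\<integral>xs. clust_risk PX mu (Chat n \<omega> xs) - clust_risk PX mu Cstar \<partial>(PiM {..<n} (\<lambda>_. PX)))
              \<le> c * (1 / sqrt (real n) + rem_R1 PX Xset mu (muhat n \<omega>) \<kappa> \<alpha>))
       \<and> (\<forall>\<epsilon>>0. \<exists>M N. \<forall>n\<ge>N.
            measure (Q \<Otimes>\<^sub>M PiM {..<n} (\<lambda>_. PX))
              {z \<in> space (Q \<Otimes>\<^sub>M PiM {..<n} (\<lambda>_. PX)).
                 \<bar>clust_risk PX mu (Chat n (fst z) (snd z)) - clust_risk PX mu Cstar\<bar>
                   > M * (sqrt (ln (real n) / real n) + rem_R1 PX Xset mu (muhat n (fst z)) \<kappa> \<alpha>)}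
              \<le> \<epsilon>)"
proof -
  \<comment> \<open>the chaining needs a strictly positive bound, and B may be 0\<close>
  define b where "b = \<bar>B\<bar> + 1"
  define c where "c = 128 * real CARD('p)^2 * b^2 * (real CARD('p) * k + 1) + 8 * real CARD('p)^2 * b"
  have b: "b > 0" "B \<le> b" unfolding b_def by auto
  have c: "c > 0" unfolding c_def using b(1) by (intro add_nonneg_pos) auto
  have \<kappa>: "\<kappa> > 0" using margin unfolding margin_condition_def by simp
  have conditional: "AE \<omega> in Q.
      integrable (PiM {..<n} (\<lambda>_. PX)) (\<lambda>xs. clust_risk PX mu (Chat n \<omega> xs) - clust_risk PX mu Cstar)
      \<and> (\<forall>xs\<in>space (PiM {..<n} (\<lambda>_. PX)). 0 \<le> clust_risk PX mu (Chat n \<omega> xs) - clust_risk PX mu Cstar)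
      \<and> (\<integral>xs. clust_risk PX mu (Chat n \<omega> xs) - clust_risk PX mu Cstar \<partial>PiM {..<n} (\<lambda>_. PX))
          \<le> c * (s + rem_R1 PX Xset mu (muhat n \<omega>) \<kappa> \<alpha>)
      \<and> 0 < s + rem_R1 PX Xset mu (muhat n \<omega>) \<kappa> \<alpha>"
    if n: "n \<ge> 1" and s: "1 / sqrt n \<le> s" "0 < s" for n s
    using A1_muhat[of n] AE_space
  proof eventually_elim
    case (elim \<omega>)
    have "\<bar>mu x $ a\<bar> \<le> B" "\<bar>muhat n \<omega> x $ a\<bar> \<le> B" if "x \<in> Xset" for x a
      using A1_mu[OF that] elim(1) that by blast+
    then have "\<bar>mu x $ a\<bar> \<le> b" "\<bar>muhat n \<omega> x $ a\<bar> \<le> b" if "x \<in> Xset" for x a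
      using that b(2) by (meson order_trans)+
    moreover have "muhat n \<omega> \<in> borel_measurable PX"
      "(\<lambda>xs. clust_risk PX mu (Chat n \<omega> xs)) \<in> borel_measurable (PiM {..<n} (\<lambda>_. PX))"
      using measurable_Pair2[OF muhat_meas[of n] elim(2)] measurable_Pair2[OF Chat_meas[of n] elim(2)]
      by simp_all
    ultimately interpret plugin_clustering PX Xset mu "muhat n \<omega>" k n b "Chat n \<omega>" Cstar
      using PX Xset mu_meas b(1) k n Chat_min[OF elim(2)] Cstar by (intro plugin_clustering.intro) simp_all
    show ?case using conditional_excess_bound[OF \<kappa> s] unfolding excess_def c_def .
  qed
  show ?thesis
    by (rule rates_from_conditional_mean_bound[OF Q _ c conditional]) (intro prob_space_PiM PX(1))
qed

end
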